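(* Let $(A,R)$, $(B,S)$ be uniform preorders, $f:(A,R)\to(B,S)$ a monotone map, and $g:B\to A$ a function. The following are equivalent: (i) $g$ is a monotone map $(B,S)\to(A,R)$ and is right adjoint to $f$ in $\mathsf{UOrd}$ (i.e. $\mathrm{id}_A\le g\circ f$ and $f\circ g\le \mathrm{id}_B$); (ii) (1) the relation $\{(f(g(b)),b)\mid b\in B\}$ is in $S$, and (2) for all $s\in S$ the relation $s^*=\{(a,gb)\mid (fa,b)\in s\}$ is in $R$. Moreover, if $S_0\subseteq S$ is a basis of $S$, then it suffices to verify condition (2) for $s\in S_0$.
   Context: A uniform preorder is a pair $(A,R)$ with $A$ a set and $R\subseteq P(A\times A)$ such that $\mathrm{id}_A\in R$, $s\circ r\in R$ whenever $r,s\in R$, and $s\in R$ whenever $r\in R$ and $s\subseteq r$. A monotone map $f:(A,R)\to(B,S)$ is a function $f:A\to B$ with $\{(fa,fa')\mid (a,a')\in r\}\in S$ for all $r\in R$; for monotone $f,g:(A,R)\to(B,S)$ one sets $f\le g$ iff $\{(fa,ga)\mid a\in A\}\in S$. This defines the locally ordered category $\mathsf{UOrd}$. A basis of $(B,S)$ is a subset $S_0\subseteq S$ such that every $s\in S$ is contained in some $s_0\in S_0$. *)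

theory Defs
  imports Main
begin

definition uniform_preorder :: "'a set \<Rightarrow> ('a \<times> 'a) set set \<Rightarrow> bool" where
  "uniform_preorder A R \<longleftrightarrow>
     R \<subseteq> Pow (A \<times> A) \<and>
     Id_on A \<in> R \<and>
     (\<forall>r\<in>R. \<forall>s\<in>R. r O s \<in> R) \<and>
     (\<forall>r\<in>R. \<forall>s. s \<subseteq> r \<longrightarrow> s \<in> R)"

definition monotone_map ::
  "'a set \<Rightarrow> ('a \<times> 'a) set set \<Rightarrow> 'b set \<Rightarrow> ('b \<times> 'b) set set \<Rightarrow> ('a \<Rightarrow> 'b) \<Rightarrow> bool" where
  "monotone_map A R B S f \<longleftrightarrow>
     (\<forall>a\<in>A. f a \<in> B) \<and> (\<forall>r\<in>R. {(f a, f a') | a a'. (a, a') \<in> r} \<in> S)"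

definition uord_le :: "'a set \<Rightarrow> ('b \<times> 'b) set set \<Rightarrow> ('a \<Rightarrow> 'b) \<Rightarrow> ('a \<Rightarrow> 'b) \<Rightarrow> bool" where
  "uord_le A S f g \<longleftrightarrow> {(f a, g a) | a. a \<in> A} \<in> S"

definition is_basis :: "('b \<times> 'b) set set \<Rightarrow> ('b \<times> 'b) set set \<Rightarrow> bool" where
  "is_basis S S0 \<longleftrightarrow> S0 \<subseteq> S \<and> (\<forall>s\<in>S. \<exists>s0\<in>S0. s \<subseteq> s0)"

definition pull_rel :: "'a set \<Rightarrow> ('a \<Rightarrow> 'b) \<Rightarrow> ('b \<Rightarrow> 'a) \<Rightarrow> ('b \<times> 'b) set \<Rightarrow> ('a \<times> 'a) set" where
  "pull_rel A f g s = {(a, g b) | a b. a \<in> A \<and> (f a, b) \<in> s}"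

end

theory Submission
  imports Defs
begin

text \<open>Write \<open>\<eta> = {(a, g (f a))}\<close> and \<open>\<epsilon> = {(f (g b), b)}\<close>. Every pulled-back relation
  factors through the unit, \<open>s\<^sup>* \<subseteq> \<eta> O g(s)\<close>, so (i) gives (ii). Conversely
  \<open>g(s) \<subseteq> (\<epsilon> O s)\<^sup>*\<close> yields monotonicity of \<open>g\<close> and \<open>\<eta> \<subseteq> (f(Id\<^sub>A))\<^sup>*\<close> the unit inequality.
  Since \<open>s \<mapsto> s\<^sup>*\<close> is monotone and \<open>R\<close> is downward closed, a basis suffices.\<close>

lemma uniform_preorder_subset:
  "uniform_preorder A R \<Longrightarrow> r \<in> R \<Longrightarrow> r \<subseteq> A \<times> A"
  unfolding uniform_preorder_def by auto

lemma uniform_preorder_Id_on: "uniform_preorder A R \<Longrightarrow> Id_on A \<in> R"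
  unfolding uniform_preorder_def by simp

lemma uniform_preorder_relcomp:
  "uniform_preorder A R \<Longrightarrow> r \<in> R \<Longrightarrow> s \<in> R \<Longrightarrow> r O s \<in> R"
  unfolding uniform_preorder_def by simp

lemma uniform_preorder_subrel:
  "uniform_preorder A R \<Longrightarrow> r \<in> R \<Longrightarrow> s \<subseteq> r \<Longrightarrow> s \<in> R"
  unfolding uniform_preorder_def by simp

lemma monotone_mapD:
  "monotone_map A R B S f \<Longrightarrow> r \<in> R \<Longrightarrow> {(f a, f a') | a a'. (a, a') \<in> r} \<in> S"
  unfolding monotone_map_def by simp

lemma uord_le_id_comp: "uord_le A R id (g \<circ> f) \<longleftrightarrow> {(a, g (f a)) | a. a \<in> A} \<in> R"
  unfolding uord_le_def by simp

lemma uord_le_comp_id: "uord_le B S (f \<circ> g) id \<longleftrightarrow> {(f (g b), b) | b. b \<in> B} \<in> S"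
  unfolding uord_le_def by simp

lemma pull_rel_mono: "s \<subseteq> t \<Longrightarrow> pull_rel A f g s \<subseteq> pull_rel A f g t"
  unfolding pull_rel_def by blast

lemma pull_rel_subset_unit_relcomp:
  "pull_rel A f g s \<subseteq> {(a, g (f a)) | a. a \<in> A} O {(g b, g b') | b b'. (b, b') \<in> s}"
  unfolding pull_rel_def by blast

lemma image_rel_subset_pull_rel_counit_relcomp:
  assumes "s \<subseteq> B \<times> B" and "\<forall>b\<in>B. g b \<in> A"
  shows "{(g b, g b') | b b'. (b, b') \<in> s} \<subseteq> pull_rel A f g ({(f (g b), b) | b. b \<in> B} O s)"
  using assms unfolding pull_rel_def by blast

lemma unit_subset_pull_rel_image_Id_on:
  "{(a, g (f a)) | a. a \<in> A} \<subseteq> pull_rel A f g {(f a, f a') | a a'. (a, a') \<in> Id_on A}"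
  unfolding pull_rel_def by blast

lemma right_adjoint_imp_pull_rel:
  assumes "uniform_preorder A R" and "monotone_map B S A R g"
    and "uord_le A R id (g \<circ> f)" and "s \<in> S"
  shows "pull_rel A f g s \<in> R"
proof -
  have "{(a, g (f a)) | a. a \<in> A} O {(g b, g b') | b b'. (b, b') \<in> s} \<in> R"
    using assms by (simp add: uniform_preorder_relcomp monotone_mapD uord_le_id_comp)
  with assms(1) show ?thesis
    using pull_rel_subset_unit_relcomp by (rule uniform_preorder_subrel)
qed

lemma pull_rel_imp_monotone_map:
  assumes "uniform_preorder A R" and "uniform_preorder B S"
    and "\<forall>b\<in>B. g b \<in> A"
    and counit: "{(f (g b), b) | b. b \<in> B} \<in> S"
    and pull: "\<forall>s\<in>S. pull_rel A f g s \<in> R"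
  shows "monotone_map B S A R g"
  unfolding monotone_map_def
proof (intro conjI ballI)
  fix b assume "b \<in> B"
  then show "g b \<in> A" using assms(3) by blast
next
  fix s assume "s \<in> S"
  then have "pull_rel A f g ({(f (g b), b) | b. b \<in> B} O s) \<in> R"
    using assms(2) counit pull by (blast intro: uniform_preorder_relcomp)
  moreover have "{(g b, g b') | b b'. (b, b') \<in> s} \<subseteq> pull_rel A f g ({(f (g b), b) | b. b \<in> B} O s)"
    using uniform_preorder_subset[OF assms(2) \<open>s \<in> S\<close>] assms(3)
    by (rule image_rel_subset_pull_rel_counit_relcomp)
  ultimately show "{(g b, g b') | b b'. (b, b') \<in> s} \<in> R"
    by (rule uniform_preorder_subrel[OF assms(1)])
qed

lemma pull_rel_imp_unit:
  assumes "uniform_preorder A R" and "monotone_map A R B S f"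
    and "\<forall>s\<in>S. pull_rel A f g s \<in> R"
  shows "uord_le A R id (g \<circ> f)"
proof -
  have "pull_rel A f g {(f a, f a') | a a'. (a, a') \<in> Id_on A} \<in> R"
    using assms by (simp add: monotone_mapD uniform_preorder_Id_on)
  with assms(1) show ?thesis
    unfolding uord_le_id_comp
    using unit_subset_pull_rel_image_Id_on by (rule uniform_preorder_subrel)
qed

lemma pull_rel_in_iff_basis:
  assumes "uniform_preorder A R" and "is_basis S S0"
  shows "(\<forall>s\<in>S. pull_rel A f g s \<in> R) \<longleftrightarrow> (\<forall>s\<in>S0. pull_rel A f g s \<in> R)"
proof
  assume "\<forall>s\<in>S. pull_rel A f g s \<in> R"
  then show "\<forall>s\<in>S0. pull_rel A f g s \<in> R"
    using assms(2) unfolding is_basis_def by blast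
next
  assume basic: "\<forall>s\<in>S0. pull_rel A f g s \<in> R"
  show "\<forall>s\<in>S. pull_rel A f g s \<in> R"
  proof
    fix s assume "s \<in> S"
    then obtain s0 where "s0 \<in> S0" and "s \<subseteq> s0"
      using assms(2) unfolding is_basis_def by blast
    with basic have "pull_rel A f g s0 \<in> R" and "pull_rel A f g s \<subseteq> pull_rel A f g s0"
      by (simp_all add: pull_rel_mono)
    then show "pull_rel A f g s \<in> R"
      by (rule uniform_preorder_subrel[OF assms(1)])
  qed
qed

theorem lemma2p1:
  fixes A :: "'a set" and R :: "('a \<times> 'a) set set"
    and B :: "'b set" and S :: "('b \<times> 'b) set set"
    and f :: "'a \<Rightarrow> 'b" and g :: "'b \<Rightarrow> 'a"
  assumes "uniform_preorder A R" and "uniform_preorder B S"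
    and "monotone_map A R B S f"
    and "\<forall>b\<in>B. g b \<in> A"
  shows "((monotone_map B S A R g \<and> uord_le A R id (g \<circ> f) \<and> uord_le B S (f \<circ> g) id)
           \<longleftrightarrow> ({(f (g b), b) | b. b \<in> B} \<in> S \<and> (\<forall>s\<in>S. pull_rel A f g s \<in> R)))
         \<and> (\<forall>S0. is_basis S S0 \<longrightarrow>
           ({(f (g b), b) | b. b \<in> B} \<in> S \<and> (\<forall>s\<in>S. pull_rel A f g s \<in> R))
           \<longleftrightarrow> ({(f (g b), b) | b. b \<in> B} \<in> S \<and> (\<forall>s\<in>S0. pull_rel A f g s \<in> R)))"
proof (intro conjI allI impI)
  let ?counit = "{(f (g b), b) | b. b \<in> B}"
  show "(monotone_map B S A R g \<and> uord_le A R id (g \<circ> f) \<and> uord_le B S (f \<circ> g) id)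
      \<longleftrightarrow> (?counit \<in> S \<and> (\<forall>s\<in>S. pull_rel A f g s \<in> R))"
  proof
    assume adjoint: "monotone_map B S A R g \<and> uord_le A R id (g \<circ> f) \<and> uord_le B S (f \<circ> g) id"
    then have "?counit \<in> S"
      by (simp add: uord_le_comp_id)
    moreover have "\<forall>s\<in>S. pull_rel A f g s \<in> R"
      using adjoint right_adjoint_imp_pull_rel[OF assms(1)] by blast
    ultimately show "?counit \<in> S \<and> (\<forall>s\<in>S. pull_rel A f g s \<in> R)" ..
  next
    assume conds: "?counit \<in> S \<and> (\<forall>s\<in>S. pull_rel A f g s \<in> R)"
    then have "monotone_map B S A R g"
      using pull_rel_imp_monotone_map[OF assms(1,2,4)] by blast
    moreover have "uord_le A R id (g \<circ> f)"
      using conds pull_rel_imp_unit[OF assms(1,3)] by blast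
    moreover have "uord_le B S (f \<circ> g) id"
      using conds by (simp add: uord_le_comp_id)
    ultimately show "monotone_map B S A R g \<and> uord_le A R id (g \<circ> f) \<and> uord_le B S (f \<circ> g) id"
      by blast
  qed
  fix S0 assume "is_basis S S0"
  with assms(1) show "(?counit \<in> S \<and> (\<forall>s\<in>S. pull_rel A f g s \<in> R))
      \<longleftrightarrow> (?counit \<in> S \<and> (\<forall>s\<in>S0. pull_rel A f g s \<in> R))"
    by (simp add: pull_rel_in_iff_basis)
qed

end
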